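(* There exists a deterministic distributed algorithm such that, for every graph $G$ (of any size $n$ and any diameter $D$), there is an assignment of advice to the nodes of $G$ with advice size $1$ (one node receives the bit $1$, all others receive the bit $0$) under which the algorithm accomplishes labeled topology recognition in $G$ within time $2D+1$.
   Context: Graphs are finite, simple, undirected, connected, with no node labels; at each node of degree $d$ the incident edges carry distinct port numbers $0,\dots,d-1$ (no coherence between endpoints). Two such graphs are isomorphic if there is a bijection of nodes preserving edges and the port numbers at both endpoints of every edge. Communication model (LOCAL): computation proceeds in synchronous rounds, all nodes start simultaneously; in each round every node may send arbitrary messages to all its neighbours, receives the messages of its neighbours (knowing the port through which each arrives), and performs arbitrary local computation. Initially a node knows only its degree and its advice. Advice: an oracle that knows the whole graph assigns to each node a binary string; the size of advice is the maximum length of these strings. All nodes execute the same deterministic algorithm, which does not know the graph. Anonymous topology recognition: every node outputs a port-labeled graph isomorphic to $G$. Labeled topology recognition: all nodes output the same port-labeled graph $H$ with distinct node labels, and each node outputs its own label, such that there is an isomorphism from $G$ to $H$ mapping every node to the node of $H$ carrying the label that node output. The time of recognition is the number of rounds after which all nodes have produced their output. *)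

theory Defs
  imports Main
begin

text \<open>A port-labeled graph with n nodes is represented by a list G of length n;
  nodes are 0..<n. The entry G!v!p = (u,q) means: the edge leaving v through
  port p goes to node u and arrives at u through port q. Node names 0..<n are not
  visible to the algorithm (graphs are anonymous).\<close>

type_synonym pgraph = "(nat \<times> nat) list list"

definition adj :: "pgraph \<Rightarrow> (nat \<times> nat) set" where
  "adj G = {(v, fst (G ! v ! p)) | v p. v < length G \<and> p < length (G ! v)}"

definition wf_pgraph :: "pgraph \<Rightarrow> bool" where
  "wf_pgraph G \<longleftrightarrow>
     G \<noteq> [] \<and>
     (\<forall>v < length G. \<forall>p < length (G ! v).
        fst (G ! v ! p) < length G \<and>
        snd (G ! v ! p) < length (G ! fst (G ! v ! p)) \<and>
        G ! fst (G ! v ! p) ! snd (G ! v ! p) = (v, p) \<and>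
        fst (G ! v ! p) \<noteq> v) \<and>
     (\<forall>v < length G. distinct (map fst (G ! v))) \<and>
     (\<forall>u < length G. \<forall>v < length G. (u, v) \<in> (adj G)\<^sup>*)"

definition gdist :: "pgraph \<Rightarrow> nat \<Rightarrow> nat \<Rightarrow> nat" where
  "gdist G u v = (LEAST k. (u, v) \<in> adj G ^^ k)"

definition diam :: "pgraph \<Rightarrow> nat" where
  "diam G = Max {gdist G u v | u v. u < length G \<and> v < length G}"

definition port_iso :: "pgraph \<Rightarrow> pgraph \<Rightarrow> (nat \<Rightarrow> nat) \<Rightarrow> bool" where
  "port_iso G H f \<longleftrightarrow>
     bij_betw f {..<length G} {..<length H} \<and>
     (\<forall>v < length G. length (H ! f v) = length (G ! v) \<and>
        (\<forall>p < length (G ! v). H ! f v ! p = (f (fst (G ! v ! p)), snd (G ! v ! p))))"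

text \<open>Local states and messages are natural numbers (which can encode any finite
  information). init receives only the degree and the advice string; send s p
  is the message sent through port p; step s ms computes the new state from
  the list ms of received messages, indexed by the receiving port; out s is the
  output (if any) in state s: an output graph and the node's own label.\<close>

record alg =
  a_init :: "nat \<Rightarrow> bool list \<Rightarrow> nat"
  a_send :: "nat \<Rightarrow> nat \<Rightarrow> nat"
  a_step :: "nat \<Rightarrow> nat list \<Rightarrow> nat"
  a_out  :: "nat \<Rightarrow> (pgraph \<times> nat) option"

fun run :: "alg \<Rightarrow> pgraph \<Rightarrow> (nat \<Rightarrow> bool list) \<Rightarrow> nat \<Rightarrow> nat \<Rightarrow> nat" where
  "run A G adv 0 v = a_init A (length (G ! v)) (adv v)"
| "run A G adv (Suc t) v =
     a_step A (run A G adv t v)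
       (map (\<lambda>(u, q). a_send A (run A G adv t u) q) (G ! v))"

definition outputs_by ::
  "alg \<Rightarrow> pgraph \<Rightarrow> (nat \<Rightarrow> bool list) \<Rightarrow> nat \<Rightarrow> nat \<Rightarrow> pgraph \<times> nat \<Rightarrow> bool" where
  "outputs_by A G adv T v res \<longleftrightarrow>
     (\<exists>t \<le> T. a_out A (run A G adv t v) = Some res \<and>
              (\<forall>t' < t. a_out A (run A G adv t' v) = None))"

definition labeled_TR ::
  "alg \<Rightarrow> pgraph \<Rightarrow> (nat \<Rightarrow> bool list) \<Rightarrow> nat \<Rightarrow> bool" where
  "labeled_TR A G adv T \<longleftrightarrow>
     (\<exists>H lab. (\<forall>v < length G. outputs_by A G adv T v (H, lab v)) \<and> port_iso G H lab)"

end

theory Submission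
  imports Defs "HOL-Library.Nat_Bijection"
begin

text \<open>Every node runs the full-information protocol and outputs as soon as its state determines
  the configuration (graph, marked node, own node) up to isomorphism; it then outputs a canonical
  representative of the rooted graph, labelled through the unique root-preserving isomorphism.
  If the views of v in G and of v' in G' agree after 2D + 1 rounds, D = diam G, then every port
  sequence of length at most 2D + 1 that is a walk from v is a walk from v', with equal degrees
  and equal advice at corresponding ends. Sending each node u to the end in G' of a shortest walk
  to u gives a port-preserving map: two walks of length at most D + 1 with a common end,
  prolonged by a common walk of length at most D to the marked node r, both end in G' at the
  unique marked node r', and walks are reversible. A port-preserving map of connected graphs
  whose fibre over r' is {r} is an isomorphism.\<close>

section \<open>Walks given by port sequences\<close>

text \<open>A walk is a list of pairs (p, q): leave through port p, arrive through port q.\<close>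

fun is_walk :: "pgraph \<Rightarrow> nat \<Rightarrow> (nat \<times> nat) list \<Rightarrow> bool" where
  "is_walk G v [] = True"
| "is_walk G v (pq # P) \<longleftrightarrow>
     fst pq < length (G ! v) \<and> snd (G ! v ! fst pq) = snd pq \<and> is_walk G (fst (G ! v ! fst pq)) P"

fun walk_end :: "pgraph \<Rightarrow> nat \<Rightarrow> (nat \<times> nat) list \<Rightarrow> nat" where
  "walk_end G v [] = v"
| "walk_end G v (pq # P) = walk_end G (fst (G ! v ! fst pq)) P"

lemma is_walk_append: "is_walk G v (P @ Q) \<longleftrightarrow> is_walk G v P \<and> is_walk G (walk_end G v P) Q"
  by (induction P arbitrary: v) auto

lemma walk_end_append: "walk_end G v (P @ Q) = walk_end G (walk_end G v P) Q"
  by (induction P arbitrary: v) auto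

lemma walk_end_less:
  "wf_pgraph G \<Longrightarrow> v < length G \<Longrightarrow> is_walk G v P \<Longrightarrow> walk_end G v P < length G"
  by (induction P arbitrary: v) (auto simp: wf_pgraph_def)

text \<open>Recording the arrival ports makes walks reversible.\<close>

lemma walk_end_inj:
  assumes G: "wf_pgraph G"
  shows "a < length G \<Longrightarrow> b < length G \<Longrightarrow> is_walk G a P \<Longrightarrow> is_walk G b P \<Longrightarrow>
    walk_end G a P = walk_end G b P \<Longrightarrow> a = b"
proof (induction P arbitrary: a b)
  case Nil
  then show ?case by simp
next
  case (Cons pq P)
  obtain p q where pq: "pq = (p, q)" by force
  have pa: "p < length (G ! a)" "snd (G ! a ! p) = q"
    and pb: "p < length (G ! b)" "snd (G ! b ! p) = q"
    using Cons.prems pq by auto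
  have "fst (G ! a ! p) = fst (G ! b ! p)"
    using Cons pq G pa pb unfolding wf_pgraph_def by auto
  moreover have "G ! fst (G ! a ! p) ! snd (G ! a ! p) = (a, p)"
    and "G ! fst (G ! b ! p) ! snd (G ! b ! p) = (b, p)"
    using G Cons.prems(1,2) pa(1) pb(1) unfolding wf_pgraph_def by blast+
  ultimately show ?case using pa pb by simp
qed

lemma relpow_adj_imp_walk:
  "(u, w) \<in> adj G ^^ k \<Longrightarrow> \<exists>P. is_walk G u P \<and> walk_end G u P = w \<and> length P = k"
proof (induction k arbitrary: w)
  case 0
  then show ?case by (intro exI[of _ "[]"]) simp
next
  case (Suc k)
  then obtain x where x: "(u, x) \<in> adj G ^^ k" "(x, w) \<in> adj G" by auto
  obtain P where P: "is_walk G u P" "walk_end G u P = x" "length P = k"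
    using Suc.IH x(1) by blast
  obtain p where p: "p < length (G ! x)" "w = fst (G ! x ! p)"
    using x(2) unfolding adj_def by auto
  show ?case
    by (intro exI[of _ "P @ [(p, snd (G ! x ! p))]"]) (simp add: is_walk_append walk_end_append P p)
qed

lemma gdist_le_diam:
  "wf_pgraph G \<Longrightarrow> u < length G \<Longrightarrow> w < length G \<Longrightarrow> gdist G u w \<le> diam G"
  unfolding diam_def by (rule Max_ge) (auto intro: finite_image_set2)

lemma walk_within_diam:
  assumes "wf_pgraph G" "u < length G" "w < length G"
  shows "\<exists>P. is_walk G u P \<and> walk_end G u P = w \<and> length P \<le> diam G"
proof -
  have "(u, w) \<in> (adj G)\<^sup>*" using assms unfolding wf_pgraph_def by auto
  then obtain k where "(u, w) \<in> adj G ^^ k" using rtrancl_power by blast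
  then have "(u, w) \<in> adj G ^^ gdist G u w" unfolding gdist_def by (rule LeastI)
  then obtain P where "is_walk G u P" "walk_end G u P = w" "length P = gdist G u w"
    using relpow_adj_imp_walk by blast
  then show ?thesis using gdist_le_diam[OF assms] by auto
qed

section \<open>Port-preserving maps and isomorphisms\<close>

definition port_hom :: "pgraph \<Rightarrow> pgraph \<Rightarrow> (nat \<Rightarrow> nat) \<Rightarrow> bool" where
  "port_hom G H f \<longleftrightarrow>
     (\<forall>v < length G. f v < length H \<and> length (H ! f v) = length (G ! v) \<and>
        (\<forall>p < length (G ! v). H ! f v ! p = (f (fst (G ! v ! p)), snd (G ! v ! p))))"

lemma port_hom_walk:
  assumes f: "port_hom G H f" and G: "wf_pgraph G" and u: "u < length G"
  shows "is_walk H (f u) Q \<longleftrightarrow> is_walk G u Q"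
    and "is_walk G u Q \<Longrightarrow> walk_end H (f u) Q = f (walk_end G u Q)"
proof -
  have "(is_walk H (f u) Q \<longleftrightarrow> is_walk G u Q) \<and>
        (is_walk G u Q \<longrightarrow> walk_end H (f u) Q = f (walk_end G u Q))"
    using u
  proof (induction Q arbitrary: u)
    case (Cons pq Q)
    show ?case
    proof (cases "fst pq < length (G ! u)")
      case True
      then have "fst (G ! u ! fst pq) < length G"
        using G Cons.prems unfolding wf_pgraph_def by auto
      then show ?thesis
        using Cons.IH[of "fst (G ! u ! fst pq)"] f Cons.prems True unfolding port_hom_def by auto
    qed (use f Cons.prems in \<open>auto simp: port_hom_def\<close>)
  qed simp
  then show "is_walk H (f u) Q \<longleftrightarrow> is_walk G u Q"
    and "is_walk G u Q \<Longrightarrow> walk_end H (f u) Q = f (walk_end G u Q)"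
    by blast+
qed

text \<open>Pull a walk from u1 to the node r back along f to u2: it ends in the fibre over f r.\<close>

lemma port_hom_inj_on:
  assumes G: "wf_pgraph G" and f: "port_hom G H f" and r: "r < length G"
    and fibre: "\<And>w. w < length G \<Longrightarrow> f w = f r \<Longrightarrow> w = r"
  shows "inj_on f {..<length G}"
proof (rule inj_onI)
  fix u1 u2 assume u: "u1 \<in> {..<length G}" "u2 \<in> {..<length G}" and eq: "f u1 = f u2"
  obtain Q where Q: "is_walk G u1 Q" "walk_end G u1 Q = r"
    using walk_within_diam[OF G _ r] u by blast
  have Q2: "is_walk G u2 Q"
    using port_hom_walk(1)[OF f G] Q(1) u eq by (metis lessThan_iff)
  have "f (walk_end G u2 Q) = f r"
    using port_hom_walk(2)[OF f G] Q Q2 u eq by (metis lessThan_iff)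
  then have "walk_end G u2 Q = r" using fibre walk_end_less[OF G] Q2 u by simp
  then show "u1 = u2" using walk_end_inj[OF G _ _ Q(1) Q2] Q(2) u by simp
qed

lemma port_hom_onto:
  assumes G: "wf_pgraph G" and H: "wf_pgraph H" and f: "port_hom G H f" and v: "v < length G"
  shows "f ` {..<length G} = {..<length H}"
proof
  show "f ` {..<length G} \<subseteq> {..<length H}" using f unfolding port_hom_def by auto
next
  have "w \<in> f ` {..<length G}" if w: "w < length H" for w
  proof -
    have "(f v, w) \<in> (adj H)\<^sup>*" using H w f v unfolding wf_pgraph_def port_hom_def by auto
    then show ?thesis
    proof (induction rule: rtrancl_induct)
      case base
      then show ?case using v by auto
    next
      case (step y z)
      then obtain x where x: "x < length G" "y = f x" by auto
      obtain p where p: "p < length (H ! y)" "z = fst (H ! y ! p)"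
        using step(2) unfolding adj_def by auto
      have "p < length (G ! x)" using f x p unfolding port_hom_def by auto
      then have "z = f (fst (G ! x ! p))" "fst (G ! x ! p) < length G"
        using f x p G unfolding port_hom_def wf_pgraph_def by auto
      then show ?case by auto
    qed
  qed
  then show "{..<length H} \<subseteq> f ` {..<length G}" by auto
qed

lemma port_hom_iso:
  assumes "wf_pgraph G" "wf_pgraph H" "port_hom G H f" "r < length G"
    and "\<And>w. w < length G \<Longrightarrow> f w = f r \<Longrightarrow> w = r"
  shows "port_iso G H f"
  using assms port_hom_inj_on[of G H f r] port_hom_onto[of G H f r]
  unfolding port_iso_def port_hom_def bij_betw_def by auto

lemma port_iso_id: "port_iso G G id"
  unfolding port_iso_def by auto

lemma port_iso_comp:
  assumes f: "port_iso G H f" and g: "port_iso H K g"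
  shows "port_iso G K (g \<circ> f)"
proof -
  have "f v < length H" if "v < length G" for v
    using f that unfolding port_iso_def bij_betw_def by auto
  then show ?thesis
    using f g bij_betw_trans unfolding port_iso_def by fastforce
qed

lemma port_iso_inv:
  assumes G: "wf_pgraph G" and f: "port_iso G H f"
  shows "port_iso H G (inv_into {..<length G} f)"
proof -
  let ?g = "inv_into {..<length G} f"
  have b: "bij_betw f {..<length G} {..<length H}" using f unfolding port_iso_def by auto
  have F: "\<And>v p. v < length G \<Longrightarrow> length (H ! f v) = length (G ! v) \<and>
        (p < length (G ! v) \<longrightarrow> H ! f v ! p = (f (fst (G ! v ! p)), snd (G ! v ! p)))"
    using f unfolding port_iso_def by auto
  have "length (G ! ?g w) = length (H ! w) \<and>
        (\<forall>p<length (H ! w). G ! ?g w ! p = (?g (fst (H ! w ! p)), snd (H ! w ! p)))"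
    if w: "w < length H" for w
  proof -
    obtain v where v: "v < length G" "w = f v" using b w unfolding bij_betw_def by auto
    have gv: "?g w = v" using v b unfolding bij_betw_def by simp
    have "G ! v ! p = (?g (fst (H ! w ! p)), snd (H ! w ! p))" if p: "p < length (H ! w)" for p
    proof -
      have p': "p < length (G ! v)" using F v p by auto
      then have "fst (G ! v ! p) < length G" using G v unfolding wf_pgraph_def by auto
      then show ?thesis using F[OF v(1)] v p' b unfolding bij_betw_def
        by (simp add: prod_eq_iff)
    qed
    then show ?thesis using gv F v by auto
  qed
  then show ?thesis unfolding port_iso_def using bij_betw_inv_into[OF b] by auto
qed

lemma port_iso_inv_apply:
  "port_iso G H f \<Longrightarrow> v < length G \<Longrightarrow> inv_into {..<length G} f (f v) = v"
  unfolding port_iso_def bij_betw_def by simp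

lemma port_iso_unique:
  assumes G: "wf_pgraph G" and f: "port_iso G H f" and g: "port_iso G H g"
    and r: "r < length G" and eq: "f r = g r" and v: "v < length G"
  shows "f v = g v"
proof -
  have "(r, v) \<in> (adj G)\<^sup>*" using G r v unfolding wf_pgraph_def by auto
  then show ?thesis
  proof (induction rule: rtrancl_induct)
    case (step y z)
    obtain p where p: "y < length G" "p < length (G ! y)" "z = fst (G ! y ! p)"
      using step(2) unfolding adj_def by auto
    have "H ! f y ! p = (f z, snd (G ! y ! p))" "H ! g y ! p = (g z, snd (G ! y ! p))"
      using f g p unfolding port_iso_def by auto
    then show ?case using step(3) by simp
  qed (use eq in simp)
qed

section \<open>The full-information algorithm\<close>

text \<open>A state encodes the round number together with the previous state and all messages
  just received; a message consists of the sender's state and the port it leaves through.\<close>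

definition full_info :: alg where
  "full_info =
     \<lparr> a_init = (\<lambda>d b. prod_encode (0, prod_encode (d, list_encode (map of_bool b)))),
       a_send = (\<lambda>s p. prod_encode (s, p)),
       a_step = (\<lambda>s ms. prod_encode (Suc (fst (prod_decode s)), prod_encode (s, list_encode ms))),
       a_out = (\<lambda>_. None) \<rparr>"

abbreviation view :: "pgraph \<Rightarrow> (nat \<Rightarrow> bool list) \<Rightarrow> nat \<Rightarrow> nat \<Rightarrow> nat" where
  "view G b \<equiv> run full_info G b"

lemma run_a_out_update: "run (A\<lparr>a_out := out\<rparr>) G b t v = run A G b t v"
  by (induction t arbitrary: v) simp_all

lemma view_0: "view G b 0 v = prod_encode (0, prod_encode (length (G ! v), list_encode (map of_bool (b v))))"
  by (simp add: full_info_def)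

lemma view_round: "fst (prod_decode (view G b t v)) = t"
  by (induction t arbitrary: v) (simp_all add: full_info_def)

lemma view_Suc:
  "view G b (Suc t) v = prod_encode (Suc t, prod_encode (view G b t v,
     list_encode (map (\<lambda>(u, q). prod_encode (view G b t u, q)) (G ! v))))"
  using view_round[of G b t v] by (simp add: full_info_def case_prod_unfold)

declare run.simps[simp del]

lemma view_eq_imp_round_eq: "view G b t v = view G' b' t' v' \<Longrightarrow> t = t'"
  by (metis view_round)

lemma view_Suc_eqD:
  assumes "view G b (Suc t) v = view G' b' (Suc t) v'"
  shows "view G b t v = view G' b' t v'"
    and "length (G ! v) = length (G' ! v')"
    and "\<And>p. p < length (G ! v) \<Longrightarrow>
           snd (G ! v ! p) = snd (G' ! v' ! p) \<and>
           view G b t (fst (G ! v ! p)) = view G' b' t (fst (G' ! v' ! p))"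
proof -
  have ms: "map (\<lambda>(u, q). prod_encode (view G b t u, q)) (G ! v) =
            map (\<lambda>(u, q). prod_encode (view G' b' t u, q)) (G' ! v')"
    using assms by (simp add: view_Suc list_encode_eq)
  show "view G b t v = view G' b' t v'" using assms by (simp add: view_Suc)
  show len: "length (G ! v) = length (G' ! v')" using arg_cong[OF ms, of length] by simp
  fix p assume "p < length (G ! v)"
  then show "snd (G ! v ! p) = snd (G' ! v' ! p) \<and>
             view G b t (fst (G ! v ! p)) = view G' b' t (fst (G' ! v' ! p))"
    using arg_cong[OF ms, of "\<lambda>xs. xs ! p"] len by (simp add: case_prod_unfold)
qed

lemma view_eq_imp_view_0_eq: "view G b t v = view G' b' t v' \<Longrightarrow> view G b 0 v = view G' b' 0 v'"
  by (induction t) (auto dest: view_Suc_eqD(1))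

lemma view_eq_imp_degree_eq: "view G b t v = view G' b' t v' \<Longrightarrow> length (G ! v) = length (G' ! v')"
  by (drule view_eq_imp_view_0_eq) (simp add: view_0)

lemma view_eq_imp_advice_eq: "view G b t v = view G' b' t v' \<Longrightarrow> b v = b' v'"
  by (drule view_eq_imp_view_0_eq) (simp add: view_0 list_encode_eq inj_def of_bool_eq_iff)

lemma view_eq_along_walk:
  "is_walk G v P \<Longrightarrow> length P \<le> t \<Longrightarrow> view G b t v = view G' b' t v' \<Longrightarrow>
   is_walk G' v' P \<and>
   view G b (t - length P) (walk_end G v P) = view G' b' (t - length P) (walk_end G' v' P)"
proof (induction P arbitrary: v v' t)
  case (Cons pq P)
  obtain s where t: "t = Suc s" using Cons.prems(2) by (cases t) simp_all
  have eq: "view G b (Suc s) v = view G' b' (Suc s) v'" using Cons.prems(3) t by simp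
  have p: "fst pq < length (G ! v)" "snd (G ! v ! fst pq) = snd pq"
    "is_walk G (fst (G ! v ! fst pq)) P"
    using Cons.prems(1) by simp_all
  note next_eq = view_Suc_eqD(3)[OF eq p(1)]
  have "length P \<le> s" using Cons.prems(2) t by simp
  note IH = Cons.IH[OF p(3) this conjunct2[OF next_eq]]
  show ?case
    using IH next_eq p view_Suc_eqD(2)[OF eq] t by simp
qed simp

section \<open>Views after 2D + 1 rounds determine the configuration\<close>

definition leader_advice :: "nat \<Rightarrow> nat \<Rightarrow> bool list" where
  "leader_advice r = (\<lambda>v. if v = r then [True] else [False])"

lemma leader_advice_eq_iff: "leader_advice r v = leader_advice r' v' \<longleftrightarrow> (v = r \<longleftrightarrow> v' = r')"
  by (simp add: leader_advice_def)

locale equal_views =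
  fixes G G' :: pgraph and r r' v v' t :: nat
  assumes wf_G: "wf_pgraph G" and wf_G': "wf_pgraph G'"
    and r: "r < length G" and v: "v < length G" and v': "v' < length G'"
    and views_eq: "view G (leader_advice r) t v = view G' (leader_advice r') t v'"
    and long: "2 * diam G + 1 \<le> t"
begin

lemma walk_transfer:
  assumes "is_walk G v P" "length P \<le> t"
  shows "is_walk G' v' P"
    and "length (G ! walk_end G v P) = length (G' ! walk_end G' v' P)"
    and "walk_end G v P = r \<longleftrightarrow> walk_end G' v' P = r'"
proof -
  note transfer = view_eq_along_walk[OF assms views_eq]
  then show "is_walk G' v' P" ..
  from transfer have ends: "view G (leader_advice r) (t - length P) (walk_end G v P) =
      view G' (leader_advice r') (t - length P) (walk_end G' v' P)" ..
  show "length (G ! walk_end G v P) = length (G' ! walk_end G' v' P)"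
    using view_eq_imp_degree_eq[OF ends] .
  show "walk_end G v P = r \<longleftrightarrow> walk_end G' v' P = r'"
    using view_eq_imp_advice_eq[OF ends] by (simp add: leader_advice_eq_iff)
qed

definition short_walk :: "nat \<Rightarrow> (nat \<times> nat) list" where
  "short_walk u = (SOME P. is_walk G v P \<and> walk_end G v P = u \<and> length P \<le> diam G)"

lemma short_walk:
  assumes "u < length G"
  shows "is_walk G v (short_walk u)" "walk_end G v (short_walk u) = u"
    and "length (short_walk u) \<le> diam G"
  using someI_ex[OF walk_within_diam[OF wf_G v assms]] unfolding short_walk_def by auto

definition node_map :: "nat \<Rightarrow> nat" where
  "node_map u = walk_end G' v' (short_walk u)"

lemma short_walk_transfers:
  assumes "u < length G"
  shows "is_walk G' v' (short_walk u)"
proof -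
  have "length (short_walk u) \<le> t" using short_walk(3)[OF assms] long by simp
  then show ?thesis by (rule walk_transfer(1)[OF short_walk(1)[OF assms]])
qed

lemma node_map_less: "u < length G \<Longrightarrow> node_map u < length G'"
  unfolding node_map_def using walk_end_less[OF wf_G' v' short_walk_transfers] .

text \<open>P and the short walk to its end, both prolonged by a walk of length at most D to r, end
  at r' in G'; reversibility of walks then identifies their ends.\<close>

lemma walk_end_node_map:
  assumes P: "is_walk G v P" "length P \<le> diam G + 1"
  shows "walk_end G' v' P = node_map (walk_end G v P)"
proof -
  define u where "u = walk_end G v P"
  have u: "u < length G" unfolding u_def using walk_end_less[OF wf_G v P(1)] .
  obtain Q where Q: "is_walk G u Q" "walk_end G u Q = r" "length Q \<le> diam G"
    using walk_within_diam[OF wf_G u r] by blast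
  have PQ: "is_walk G' (walk_end G' v' P) Q" "walk_end G' (walk_end G' v' P) Q = r'"
    using walk_transfer(1,3)[of "P @ Q"] P Q long u_def
    by (auto simp: is_walk_append walk_end_append)
  have SQ: "is_walk G' (node_map u) Q" "walk_end G' (node_map u) Q = r'"
    using walk_transfer(1,3)[of "short_walk u @ Q"] short_walk[OF u] Q long
    by (auto simp: is_walk_append walk_end_append node_map_def)
  have "walk_end G' v' P < length G'"
    using walk_end_less[OF wf_G' v'] walk_transfer(1)[OF P(1)] P(2) long by simp
  then show ?thesis
    using walk_end_inj[OF wf_G' _ node_map_less[OF u] PQ(1) SQ(1)] PQ(2) SQ(2) u_def by simp
qed

lemma port_hom_node_map: "port_hom G G' node_map"
  unfolding port_hom_def
proof (intro allI impI conjI)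
  fix u assume u: "u < length G"
  show "node_map u < length G'" using node_map_less u .
  show "length (G' ! node_map u) = length (G ! u)"
    using walk_transfer(2)[of "short_walk u"] short_walk[OF u] long unfolding node_map_def by auto
  fix p assume p: "p < length (G ! u)"
  define P where "P = short_walk u @ [(p, snd (G ! u ! p))]"
  have P: "is_walk G v P" "length P \<le> diam G + 1" "walk_end G v P = fst (G ! u ! p)"
    using short_walk[OF u] p by (auto simp: P_def is_walk_append walk_end_append)
  have "is_walk G' (node_map u) [(p, snd (G ! u ! p))]"
    using walk_transfer(1)[OF P(1)] P(2) long by (simp add: P_def node_map_def is_walk_append)
  moreover have "walk_end G' (node_map u) [(p, snd (G ! u ! p))] = node_map (fst (G ! u ! p))"
    using walk_end_node_map[OF P(1,2)] P(3) by (simp add: P_def node_map_def walk_end_append)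
  ultimately show "G' ! node_map u ! p = (node_map (fst (G ! u ! p)), snd (G ! u ! p))"
    by (cases "G' ! node_map u ! p") auto
qed

lemma node_map_eq_r'_iff: "u < length G \<Longrightarrow> node_map u = r' \<longleftrightarrow> u = r"
  using walk_transfer(3)[of "short_walk u"] short_walk[of u] long unfolding node_map_def by auto

lemma node_map_v: "node_map v = v'"
  using walk_end_node_map[of "[]"] by simp

lemma iso_of_equal_views: "\<exists>f. port_iso G G' f \<and> f r = r' \<and> f v = v'"
proof (intro exI conjI)
  show "port_iso G G' node_map"
    using port_hom_iso[OF wf_G wf_G' port_hom_node_map r] node_map_eq_r'_iff r by metis
  show "node_map r = r'" using node_map_eq_r'_iff r by simp
  show "node_map v = v'" by (fact node_map_v)
qed

end

section \<open>The recognition algorithm\<close>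

definition configs :: "nat \<Rightarrow> (pgraph \<times> nat \<times> nat) set" where
  "configs s = {(H, h, w). wf_pgraph H \<and> h < length H \<and> w < length H \<and>
                           (\<exists>t. view H (leader_advice h) t w = s)}"

fun pointed_iso :: "pgraph \<times> nat \<times> nat \<Rightarrow> pgraph \<times> nat \<times> nat \<Rightarrow> bool" where
  "pointed_iso (G, r, v) (H, h, w) \<longleftrightarrow> (\<exists>f. port_iso G H f \<and> f r = h \<and> f v = w)"

lemma pointed_iso_sym:
  assumes G: "wf_pgraph G" and r: "r < length G" and v: "v < length G"
    and iso: "pointed_iso (G, r, v) y"
  shows "pointed_iso y (G, r, v)"
proof -
  obtain H h w f where y: "y = (H, h, w)" and f: "port_iso G H f" "f r = h" "f v = w"
    using iso by (cases y) auto
  show ?thesis unfolding y pointed_iso.simps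
    using port_iso_inv[OF G f(1)] port_iso_inv_apply[OF f(1) r] port_iso_inv_apply[OF f(1) v] f(2,3)
    by blast
qed

lemma pointed_iso_trans: "pointed_iso x y \<Longrightarrow> pointed_iso y z \<Longrightarrow> pointed_iso x z"
  by (cases x; cases y; cases z) (auto intro: port_iso_comp)

definition determines :: "nat \<Rightarrow> bool" where
  "determines s \<longleftrightarrow> configs s \<noteq> {} \<and> (\<forall>x \<in> configs s. \<forall>y \<in> configs s. pointed_iso x y)"

text \<open>The choice depends only on the isomorphism class of the rooted graph, so all nodes agree.\<close>

definition canon :: "pgraph \<Rightarrow> nat \<Rightarrow> pgraph \<times> nat" where
  "canon G r = (SOME (H, h). \<exists>f. port_iso G H f \<and> f r = h)"

definition canon_iso :: "pgraph \<Rightarrow> nat \<Rightarrow> nat \<Rightarrow> nat" where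
  "canon_iso G r = (SOME f. port_iso G (fst (canon G r)) f \<and> f r = snd (canon G r))"

definition decode :: "nat \<Rightarrow> pgraph \<times> nat" where
  "decode s = (case SOME x. x \<in> configs s of (H, h, w) \<Rightarrow> (fst (canon H h), canon_iso H h w))"

definition recognize :: alg where
  "recognize = full_info\<lparr>a_out := (\<lambda>s. if determines s then Some (decode s) else None)\<rparr>"

lemma canon_iso: "port_iso G (fst (canon G r)) (canon_iso G r) \<and> canon_iso G r r = snd (canon G r)"
proof -
  have "\<exists>f. port_iso G (fst (canon G r)) f \<and> f r = snd (canon G r)"
    unfolding canon_def
    by (rule someI2[of _ "(G, r)"]) (auto intro: port_iso_id)
  then show ?thesis unfolding canon_iso_def by (rule someI_ex)
qed

lemma canon_eq:
  assumes G: "wf_pgraph G" and g: "port_iso G G1 g" and r: "r < length G"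
  shows "canon G1 (g r) = canon G r"
proof -
  have "(\<exists>f. port_iso G1 H f \<and> f (g r) = h) \<longleftrightarrow> (\<exists>f. port_iso G H f \<and> f r = h)" for H h
  proof
    assume "\<exists>f. port_iso G1 H f \<and> f (g r) = h"
    then show "\<exists>f. port_iso G H f \<and> f r = h" using port_iso_comp[OF g] by force
  next
    assume "\<exists>f. port_iso G H f \<and> f r = h"
    then obtain f where f: "port_iso G H f" "f r = h" by blast
    show "\<exists>f. port_iso G1 H f \<and> f (g r) = h"
      using port_iso_comp[OF port_iso_inv[OF G g] f(1)] port_iso_inv_apply[OF g r] f(2)
      by (intro exI[of _ "f \<circ> inv_into {..<length G} g"]) auto
  qed
  then show ?thesis unfolding canon_def by simp
qed

lemma decode_correct:
  assumes G: "wf_pgraph G" and r: "r < length G" and v: "v < length G"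
    and det: "determines s" and mem: "(G, r, v) \<in> configs s"
  shows "decode s = (fst (canon G r), canon_iso G r v)"
proof -
  obtain G1 r1 v1 where x: "(SOME x. x \<in> configs s) = (G1, r1, v1)"
    by (cases "SOME x. x \<in> configs s") auto
  have x1: "(G1, r1, v1) \<in> configs s" unfolding x[symmetric] using mem by (rule someI)
  then obtain g where g: "port_iso G G1 g" "g r = r1" "g v = v1"
    using det mem unfolding determines_def by fastforce
  have ce: "canon G1 r1 = canon G r" using canon_eq[OF G g(1) r] g(2) by simp
  have "canon_iso G1 r1 (g v) = canon_iso G r v"
    using port_iso_unique[OF G port_iso_comp[OF g(1)] conjunct1[OF canon_iso] r]
      canon_iso[of G1 r1] canon_iso[of G r] ce g(2) v
    by simp
  then show ?thesis unfolding decode_def using x ce g(3) by simp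
qed

lemma determines_after_2diam:
  assumes G: "wf_pgraph G" and r: "r < length G" and v: "v < length G"
  shows "determines (view G (leader_advice r) (2 * diam G + 1) v)"
proof -
  let ?s = "view G (leader_advice r) (2 * diam G + 1) v"
  have iso: "pointed_iso (G, r, v) y" if y: "y \<in> configs ?s" for y
  proof -
    obtain G' r' v' t where y': "y = (G', r', v')" "wf_pgraph G'" "r' < length G'" "v' < length G'"
      and t: "view G' (leader_advice r') t v' = ?s"
      using y unfolding configs_def by auto
    have "t = 2 * diam G + 1" using view_eq_imp_round_eq[OF t] .
    then interpret equal_views G G' r r' v v' "2 * diam G + 1"
      using G r v y' t by unfold_locales auto
    show ?thesis using iso_of_equal_views y'(1) by simp
  qed
  have "pointed_iso x y" if "x \<in> configs ?s" "y \<in> configs ?s" for x y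
    using pointed_iso_trans[OF pointed_iso_sym[OF G r v iso[OF that(1)]] iso[OF that(2)]] .
  moreover have "(G, r, v) \<in> configs ?s" unfolding configs_def using G r v by blast
  ultimately show ?thesis unfolding determines_def by blast
qed

lemma recognize_outputs:
  assumes G: "wf_pgraph G" and r: "r < length G" and v: "v < length G"
  shows "outputs_by recognize G (leader_advice r) (2 * diam G + 1) v (fst (canon G r), canon_iso G r v)"
proof -
  let ?det = "\<lambda>t. determines (view G (leader_advice r) t v)"
  define t0 where "t0 = (LEAST t. ?det t)"
  have T: "?det (2 * diam G + 1)" using determines_after_2diam[OF G r v] .
  have t0: "?det t0" "t0 \<le> 2 * diam G + 1" unfolding t0_def using T by (auto intro: LeastI Least_le)
  have before: "\<not> ?det t'" if "t' < t0" for t'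
    using not_less_Least[OF that[unfolded t0_def]] .
  have "(G, r, v) \<in> configs (view G (leader_advice r) t0 v)" unfolding configs_def using G r v by blast
  then show ?thesis
    unfolding outputs_by_def recognize_def run_a_out_update
    using t0 before decode_correct[OF G r v t0(1)] by (intro exI[of _ t0]) auto
qed

theorem proposition3p1:
  shows "\<exists>A :: alg. \<forall>G. wf_pgraph G \<longrightarrow>
           (\<exists>r < length G.
              labeled_TR A G (\<lambda>v. if v = r then [True] else [False]) (2 * diam G + 1))"
proof (intro exI[of _ recognize] allI impI)
  fix G assume G: "wf_pgraph G"
  then have r: "0 < length G" unfolding wf_pgraph_def by auto
  have "labeled_TR recognize G (leader_advice 0) (2 * diam G + 1)"
    unfolding labeled_TR_def using recognize_outputs[OF G r] canon_iso by blast
  then show "\<exists>r < length G. labeled_TR recognize G (\<lambda>v. if v = r then [True] else [False]) (2 * diam G + 1)"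
    using r unfolding leader_advice_def by blast
qed

end
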